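(* Let $\mathcal E_{\mathcal F}$ be an $A_\infty$-category and $\mathcal F\subset\mathcal E_{\mathcal F}$ a full $A_\infty$-subcategory such that $b_n$ vanishes on $D_n(\mathcal E_{\mathcal F}|\mathcal F)$ for all $n\ge2$. Then the canonical strict embedding $\mathsf j:\mathcal E_{\mathcal F}\to\mathsf D(\mathcal E_{\mathcal F}|\mathcal F)$ admits a splitting strict $A_\infty$-functor $\pi:\mathsf D(\mathcal E_{\mathcal F}|\mathcal F)\to\mathcal E_{\mathcal F}$, i.e. $\mathsf j\pi=\mathrm{id}_{\mathcal E_{\mathcal F}}$, whose first component $\pi_1$ is the composite $s\mathsf D(\mathcal E_{\mathcal F}|\mathcal F)\hookrightarrow T^+s\mathcal E_{\mathcal F}\xrightarrow{\mathrm{pr}_1}s\mathcal E_{\mathcal F}$.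
   Context: Conventions: $\Bbbk$ commutative ring, $\otimes=\otimes_\Bbbk$ with Koszul signs, maps written on the right. An $A_\infty$-category has degree 1 maps $b_n:T^ns\mathcal A\to s\mathcal A$ ($s$ suspension, $T^ns\mathcal A(X,Y)=\bigoplus s\mathcal A(X,X_1)\otimes\cdots\otimes s\mathcal A(X_{n-1},Y)$) with $\sum(1^{\otimes r}\otimes b_n\otimes1^{\otimes t})b_{r+1+t}=0$. An $A_\infty$-functor $f$ has an object map and degree 0 components $f_n$ with $\sum(f_{i_1}\otimes\cdots\otimes f_{i_l})b_l=\sum(1^{\otimes r}\otimes b_n\otimes1^{\otimes t})f_{r+1+t}$; it is strict if $f_n=0$ for $n\ge2$. For a full subcategory $\mathcal F\subset\mathcal E$ and $n\ge2$, $D_n(\mathcal E|\mathcal F)\subset(s\mathcal E)^{\otimes n}$ is the sum of all $s\mathcal E(X_0,X_1)\otimes\cdots\otimes s\mathcal E(X_{n-1},X_n)$ with at least one $X_i\in\mathrm{Ob}\,\mathcal F$. $T^+s\mathcal E=\bigoplus_{n\ge1}T^ns\mathcal E$, $\mathrm{pr}_1$ the projection onto $T^1s\mathcal E=s\mathcal E$, and $\mu^{(n)}$ the $n$-fold concatenation of tensor words. $\mathsf D(\mathcal E|\mathcal F)$ is the $A_\infty$-category with objects $\mathrm{Ob}\,\mathcal E$, $s\mathsf D(\mathcal E|\mathcal F)(X,Y)=\bigoplus_{n\ge1}\bigoplus_{C_1,\dots,C_{n-1}\in\mathrm{Ob}\,\mathcal F}s\mathcal E(X,C_1)\otimes\cdots\otimes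 s\mathcal E(C_{n-1},Y)\subset T^+s\mathcal E(X,Y)$, with $\bar b_1=\sum1^{\otimes q}\otimes b_m\otimes1^{\otimes t}$ on $T^ks\mathcal E$ and, for $n\ge2$, $\bar b_n=\mu^{(n)}\sum_{m;\,q<k;\,t<l}1^{\otimes q}\otimes b_m\otimes1^{\otimes t}$ on $T^ks\mathcal E\otimes(T^+s\mathcal E)^{\otimes n-2}\otimes T^ls\mathcal E$. The canonical strict embedding $\mathsf j:\mathcal E\to\mathsf D(\mathcal E|\mathcal F)$ is the identity on objects with $\mathsf j_1$ the inclusion of the summand $s\mathcal E(X,Y)$ and $\mathsf j_n=0$ for $n>1$. *)

theory Defs
  imports Complex_Main
begin

(* All hom-modules s E(X,Y) are graded
   k-submodules of one ambient k-module 'm (scalar multiplication "sc");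
   hom X Y d is the degree-d component of s E(X,Y).
   A composable tensor word  a_1 (x) ... (x) a_n  with a_i in sE(X_{i-1},X_i)^{d_i}
   is recorded as (os, ds, as) with os = [X_0,...,X_n], ds = [d_1..d_n], as = [a_1..a_n].
   Linear maps out of tensor products are given by their (multilinear) values on
   pure tensors of homogeneous elements.  b os as is the value of b_n (n = length as)
   on a_1 (x) ... (x) a_n in sE(X_0,X_1) (x) ... (x) sE(X_{n-1},X_n). *)

definition ksign :: "int \<Rightarrow> 'k::comm_ring_1" where
  "ksign s = (if even s then 1 else -1)"

definition homw :: "'o set \<Rightarrow> ('o \<Rightarrow> 'o \<Rightarrow> int \<Rightarrow> 'm set)
                    \<Rightarrow> 'o list \<Rightarrow> int list \<Rightarrow> 'm list \<Rightarrow> bool" where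
  "homw Obj hom os ds as \<longleftrightarrow>
     length os = length as + 1 \<and> length ds = length as \<and> set os \<subseteq> Obj \<and>
     (\<forall>i<length as. as ! i \<in> hom (os ! i) (os ! (i+1)) (ds ! i))"

definition graded_homs ::
  "('k::comm_ring_1 \<Rightarrow> 'm::ab_group_add \<Rightarrow> 'm) \<Rightarrow> 'o set \<Rightarrow> ('o \<Rightarrow> 'o \<Rightarrow> int \<Rightarrow> 'm set) \<Rightarrow> bool" where
  "graded_homs sc Obj hom \<longleftrightarrow> module sc \<and>
     (\<forall>X Y d. 0 \<in> hom X Y d \<and> (\<forall>x\<in>hom X Y d. \<forall>y\<in>hom X Y d. x + y \<in> hom X Y d)
        \<and> (\<forall>c. \<forall>x\<in>hom X Y d. sc c x \<in> hom X Y d)) \<and>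
     (\<forall>X Y d e. d \<noteq> e \<longrightarrow> hom X Y d \<inter> hom X Y e = {0})"

definition ainf_cat ::
  "('k::comm_ring_1 \<Rightarrow> 'm::ab_group_add \<Rightarrow> 'm) \<Rightarrow> 'o set \<Rightarrow> ('o \<Rightarrow> 'o \<Rightarrow> int \<Rightarrow> 'm set)
   \<Rightarrow> ('o list \<Rightarrow> 'm list \<Rightarrow> 'm) \<Rightarrow> bool" where
  "ainf_cat sc Obj hom b \<longleftrightarrow> graded_homs sc Obj hom \<and>
     \<comment> \<open>b_n has degree 1\<close>
     (\<forall>os ds as. 1 \<le> length as \<and> homw Obj hom os ds as \<longrightarrow>
        b os as \<in> hom (hd os) (last os) (sum_list ds + 1)) \<and>
     \<comment> \<open>b_n is k-multilinear\<close>
     (\<forall>os ds as i y c. 1 \<le> length as \<and> homw Obj hom os ds as \<and> i < length as \<and>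
        y \<in> hom (os ! i) (os ! (i+1)) (ds ! i) \<longrightarrow>
        b os (as[i := as ! i + y]) = b os as + b os (as[i := y]) \<and>
        b os (as[i := sc c (as ! i)]) = sc c (b os as)) \<and>
     \<comment> \<open>A_infinity equations, Koszul sign (x(x)y)(f(x)g) = (-1)^(|y||f|) xf(x)yg\<close>
     (\<forall>os ds as. 1 \<le> length as \<and> homw Obj hom os ds as \<longrightarrow>
        (\<Sum>r\<in>{0..length as}. \<Sum>n\<in>{1..length as - r}.
           sc (ksign (sum_list (drop (r+n) ds)))
              (b (take (r+1) os @ drop (r+n) os)
                 (take r as @ [b (take (n+1) (drop r os)) (take n (drop r as))] @ drop (r+n) as)))
        = 0)"

definition vanishes_on_D ::
  "'o set \<Rightarrow> ('o \<Rightarrow> 'o \<Rightarrow> int \<Rightarrow> 'm::zero set) \<Rightarrow> 'o set \<Rightarrow> ('o list \<Rightarrow> 'm list \<Rightarrow> 'm) \<Rightarrow> bool" where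
  "vanishes_on_D Obj hom FOb b \<longleftrightarrow>
     (\<forall>os ds as. 2 \<le> length as \<and> homw Obj hom os ds as \<and> (\<exists>X\<in>set os. X \<in> FOb) \<longrightarrow>
        b os as = 0)"

(* generator words of s D(E|F)(X,Y): s E(X,C_1) (x) ... (x) s E(C_{n-1},Y), C_i in Ob F *)
definition dword :: "'o set \<Rightarrow> ('o \<Rightarrow> 'o \<Rightarrow> int \<Rightarrow> 'm set) \<Rightarrow> 'o set
                     \<Rightarrow> 'o list \<times> int list \<times> 'm list \<Rightarrow> bool" where
  "dword Obj hom FOb w \<longleftrightarrow> (case w of (os, ds, as) \<Rightarrow>
     1 \<le> length as \<and> homw Obj hom os ds as \<and> (\<forall>i. 0 < i \<and> i < length as \<longrightarrow> os ! i \<in> FOb))"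

definition wchain :: "('o list \<times> int list \<times> 'm list) list \<Rightarrow> bool" where
  "wchain ws \<longleftrightarrow> (\<forall>i. i + 1 < length ws \<longrightarrow> last (fst (ws ! i)) = hd (fst (ws ! (i+1))))"

definition wconcat :: "('o list \<times> int list \<times> 'm list) list \<Rightarrow> 'o list \<times> int list \<times> 'm list" where
  "wconcat ws = (concat (map (butlast \<circ> fst) ws) @ [last (fst (last ws))],
                 concat (map (fst \<circ> snd) ws), concat (map (snd \<circ> snd) ws))"

(* elements of T^+ sE represented as formal sums of pure tensor words c * (a_1 (x) ... (x) a_k) *)
type_synonym ('k, 'm) tsum = "('k \<times> 'm list) list"

(* bbar_n on w_1 (x) ... (x) w_n (w_1 in T^k, w_n in T^l):
   mu^(n) followed by sum of 1^q (x) b_m (x) 1^t with q < k, t < l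
   (for n = 1 these restrictions are automatic, giving bbar_1) *)
definition bbar :: "('o list \<Rightarrow> 'm list \<Rightarrow> 'm) \<Rightarrow> ('o list \<times> int list \<times> 'm list) list
                    \<Rightarrow> ('k::comm_ring_1, 'm) tsum" where
  "bbar b ws = (case wconcat ws of (os, ds, as) \<Rightarrow>
     let N = length as; k = length (snd (snd (hd ws))); l = length (snd (snd (last ws))) in
     concat (map (\<lambda>q. map (\<lambda>m. let t = N - q - m in
         (ksign (sum_list (drop (q+m) ds)),
          take q as @ [b (take (m+1) (drop q os)) (take m (drop q as))] @ drop (q+m) as))
       (filter (\<lambda>m. N - q - m < l) [1..<N - q + 1]))
       (filter (\<lambda>q. q < k) [0..<N])))"

definition pr1 :: "('k::comm_ring_1 \<Rightarrow> 'm::ab_group_add \<Rightarrow> 'm) \<Rightarrow> ('k, 'm) tsum \<Rightarrow> 'm" where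
  "pr1 sc x = sum_list (map (\<lambda>(c, w). if length w = 1 then sc c (hd w) else 0) x)"

definition pi1 :: "('k::comm_ring_1 \<Rightarrow> 'm::ab_group_add \<Rightarrow> 'm) \<Rightarrow> 'm list \<Rightarrow> 'm" where
  "pi1 sc as = pr1 sc [(1, as)]"

definition j1 :: "'m \<Rightarrow> 'm list" where
  "j1 a = [a]"

end

theory Submission
  imports Defs
begin

(* pi_1 is the identity on words of length one and kills all longer generator words.
   On a composable chain w_1 (x) ... (x) w_n of generator words, pr_1 bbar_n keeps only the
   term b_N applied to the whole concatenation mu^(n)(w_1 ... w_n): every other term of bbar_n
   is a word of length at least two.  If all w_i have length one, this is exactly
   b_n(pi_1 w_1, ..., pi_1 w_n).  Otherwise some pi_1 w_i = 0, so the left side vanishes by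
   multilinearity, and the concatenation is a word of length at least two passing through an
   object of F, on which b vanishes by hypothesis. *)

lemma module_if_ainf_cat: "ainf_cat sc Obj hom b \<Longrightarrow> module sc"
  unfolding ainf_cat_def graded_homs_def by blast

lemma zero_mem_hom_if_ainf_cat: "ainf_cat sc Obj hom b \<Longrightarrow> 0 \<in> hom X Y d"
  unfolding ainf_cat_def graded_homs_def by blast

lemma b_eq_0_if_nth_eq_0:
  assumes A: "ainf_cat sc Obj hom b" and h: "homw Obj hom os ds as"
    and i: "i < length as" and zero: "as ! i = 0"
  shows "b os as = 0"
proof -
  have m: "module sc" using A by (rule module_if_ainf_cat)
  have "as ! i \<in> hom (os ! i) (os ! (i+1)) (ds ! i)" using h i unfolding homw_def by blast
  moreover have "1 \<le> length as" using i by simp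
  ultimately have "b os (as[i := sc 0 (as ! i)]) = sc 0 (b os as)"
    using A h i unfolding ainf_cat_def by blast
  then show ?thesis using zero m by (metis list_update_id module.scale_zero_left)
qed

lemma pi1_conv: "pi1 sc as = (if length as = 1 then sc 1 (hd as) else 0)"
  unfolding pi1_def pr1_def by simp

lemma pi1_j1: "module sc \<Longrightarrow> pi1 sc (j1 a) = a"
  by (simp add: pi1_conv j1_def module.scale_one)

lemma pi1_mem_hom:
  assumes A: "ainf_cat sc Obj hom b" and d: "dword Obj hom FOb (os, ds, as)"
  shows "pi1 sc as \<in> hom (hd os) (last os) (sum_list ds)"
proof (cases "length as = 1")
  case True
  then obtain a where "as = [a]" by (metis One_nat_def length_0_conv length_Suc_conv)
  moreover have "length os = 2" "length ds = 1" using d True unfolding dword_def homw_def by auto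
  ultimately have "a \<in> hom (hd os) (last os) (sum_list ds)"
    using d unfolding dword_def homw_def
    by (auto simp: hd_conv_nth last_conv_nth length_Suc_conv numeral_2_eq_2)
  then show ?thesis using \<open>as = [a]\<close> module_if_ainf_cat[OF A] by (simp add: pi1_conv module.scale_one)
next
  case False
  then show ?thesis using zero_mem_hom_if_ainf_cat[OF A] by (simp add: pi1_conv)
qed

lemma homw_append:
  assumes h1: "homw Obj hom os1 ds1 as1" and h2: "homw Obj hom os2 ds2 as2"
    and join: "last os1 = hd os2"
  shows "homw Obj hom (butlast os1 @ os2) (ds1 @ ds2) (as1 @ as2)"
  unfolding homw_def
proof (intro conjI allI impI)
  have len: "length (butlast os1) = length as1" "length ds1 = length as1" "os2 \<noteq> []"
    using h1 h2 unfolding homw_def by auto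
  have "os1 \<noteq> []" using h1 unfolding homw_def by auto
  then have os: "butlast os1 @ os2 = os1 @ tl os2"
    using join len(3) by (metis append_butlast_last_id append_assoc append_Cons append_Nil list.collapse)
  fix i assume i: "i < length (as1 @ as2)"
  show "(as1 @ as2) ! i \<in> hom ((butlast os1 @ os2) ! i) ((butlast os1 @ os2) ! (i + 1)) ((ds1 @ ds2) ! i)"
  proof (cases "i < length as1")
    case True
    then show ?thesis using h1 len unfolding os homw_def by (auto simp: nth_append)
  next
    case False
    then obtain k where "i = length as1 + k" by (metis le_add_diff_inverse not_less)
    then show ?thesis using h2 i len unfolding homw_def by (auto simp: nth_append)
  qed
qed (use h1 h2 in \<open>auto simp: homw_def dest: in_set_butlastD\<close>)

lemma wchain_Cons:
  "wchain (w # ws) \<longleftrightarrow> wchain ws \<and> (ws \<noteq> [] \<longrightarrow> last (fst w) = hd (fst (hd ws)))"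
  unfolding wchain_def by (auto simp: hd_conv_nth nth_Cons' split: if_splits)

lemma wconcat_Cons:
  "ws \<noteq> [] \<Longrightarrow> wconcat (w # ws) =
     (butlast (fst w) @ fst (wconcat ws), fst (snd w) @ fst (snd (wconcat ws)),
      snd (snd w) @ snd (snd (wconcat ws)))"
  unfolding wconcat_def by simp

lemma homw_wconcat:
  assumes "ws \<noteq> []" "\<forall>w\<in>set ws. dword Obj hom FOb w" "wchain ws"
  shows "homw Obj hom (fst (wconcat ws)) (fst (snd (wconcat ws))) (snd (snd (wconcat ws)))
    \<and> hd (fst (wconcat ws)) = hd (fst (hd ws))"
  using assms
proof (induction ws rule: list_nonempty_induct)
  case (single w)
  then have "fst w \<noteq> []" by (cases w) (auto simp: dword_def homw_def)
  then have "wconcat [w] = w" by (cases w) (simp add: wconcat_def)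
  then show ?case using single by (cases w) (simp add: dword_def)
next
  case (cons w ws)
  obtain os ds as where w: "w = (os, ds, as)" by (cases w)
  then have "homw Obj hom os ds as" "as \<noteq> []" using cons.prems(1) by (auto simp: dword_def)
  then have "butlast os \<noteq> [] \<and> hd (butlast os) = hd os" by (cases os) (auto simp: homw_def)
  moreover have "homw Obj hom (fst (wconcat ws)) (fst (snd (wconcat ws))) (snd (snd (wconcat ws)))"
    "last os = hd (fst (wconcat ws))"
    using cons w by (auto simp: wchain_Cons)
  ultimately show ?case
    using homw_append[OF \<open>homw Obj hom os ds as\<close>] cons.hyps w by (simp add: wconcat_Cons)
qed

lemma wconcat_of_length_one_words:
  assumes "\<forall>w\<in>set ws. \<exists>X Y d a. w = ([X, Y], [d], [a])"
  shows "wconcat ws = (map (hd \<circ> fst) ws @ [last (fst (last ws))],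
    map (hd \<circ> fst \<circ> snd) ws, map (hd \<circ> snd \<circ> snd) ws)"
proof -
  have "map (butlast \<circ> fst) ws = map (\<lambda>w. [hd (fst w)]) ws"
    "map (fst \<circ> snd) ws = map (\<lambda>w. [hd (fst (snd w))]) ws"
    "map (snd \<circ> snd) ws = map (\<lambda>w. [hd (snd (snd w))]) ws"
    using assms by (auto intro!: map_cong)
  then show ?thesis unfolding wconcat_def by (simp only: concat_map_singleton) (simp add: comp_def)
qed

lemma dword_of_length_one:
  assumes "dword Obj hom FOb w" "length (snd (snd w)) = 1"
  shows "\<exists>X Y d a. w = ([X, Y], [d], [a])"
  using assms by (cases w) (auto simp: dword_def homw_def length_Suc_conv numeral_2_eq_2)

lemma homw_map_pi1:
  assumes A: "ainf_cat sc Obj hom b"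
    and ws: "ws \<noteq> []" "\<forall>w\<in>set ws. dword Obj hom FOb w" "wchain ws"
  shows "homw Obj hom (map (hd \<circ> fst) ws @ [last (fst (last ws))])
    (map (sum_list \<circ> fst \<circ> snd) ws) (map (\<lambda>w. pi1 sc (snd (snd w))) ws)"
    (is "homw Obj hom ?os ?ds ?as")
  unfolding homw_def
proof (intro conjI allI impI)
  have objs: "fst w \<noteq> [] \<and> set (fst w) \<subseteq> Obj" if "w \<in> set ws" for w
    using ws(2) that by (cases w) (auto simp: dword_def homw_def)
  have "hd (fst w) \<in> Obj" if "w \<in> set ws" for w
    using objs[OF that] hd_in_set by blast
  moreover have "last (fst (last ws)) \<in> Obj"
    using objs[of "last ws"] ws(1) by (simp add: subset_iff)
  ultimately show "set ?os \<subseteq> Obj"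
    by auto
  fix i assume "i < length ?as"
  then have i: "i < length ws" by simp
  have "pi1 sc (snd (snd (ws ! i))) \<in> hom (hd (fst (ws ! i))) (last (fst (ws ! i))) (sum_list (fst (snd (ws ! i))))"
    using pi1_mem_hom[OF A, of FOb "fst (ws ! i)"] ws(2) i by simp
  moreover have "?os ! (i + 1) = last (fst (ws ! i))"
  proof (cases "Suc i = length ws")
    case True
    then have "last ws = ws ! i" using ws(1) last_conv_nth by (metis diff_Suc_1)
    then show ?thesis using True by (simp add: nth_append)
  next
    case False
    then show ?thesis using ws(3) i by (simp add: wchain_def nth_append)
  qed
  ultimately show "?as ! i \<in> hom (?os ! i) (?os ! (i + 1)) (?ds ! i)"
    using i by (simp add: nth_append)
qed (simp_all only: length_map length_append list.size)

lemma sum_list_map_concat: "sum_list (map g (concat xss)) = (\<Sum>xs\<leftarrow>xss. sum_list (map g xs))"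
  by (induction xss) auto

lemma pr1_bbar_eq_b_wconcat:
  assumes wc: "wconcat ws = (os, ds, as)" and m: "module sc"
    and len: "length os = length as + 1" "length ds = length as" "as \<noteq> []"
    and ne: "snd (snd (hd ws)) \<noteq> []" "snd (snd (last ws)) \<noteq> []"
  shows "pr1 sc (bbar b ws :: ('k::comm_ring_1, 'm::ab_group_add) tsum) = b os as"
proof -
  define N where "N = length as"
  define Q where "Q = filter (\<lambda>q. q < length (snd (snd (hd ws)))) [0..<N]"
  define M where "M = (\<lambda>q. filter (\<lambda>m. N - q - m < length (snd (snd (last ws)))) [1..<N - q + 1])"
  define F where "F = (\<lambda>q m. (ksign (sum_list (drop (q+m) ds)) :: 'k,
     take q as @ [b (take (m+1) (drop q os)) (take m (drop q as))] @ drop (q+m) as))"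
  define g where "g = (\<lambda>(c::'k, w). if length w = 1 then sc c (hd w) else 0)"
  have "bbar b ws = concat (map (\<lambda>q. map (F q) (M q)) Q)"
    unfolding bbar_def wc F_def N_def Q_def M_def by (simp only: Let_def prod.case)
  then have "pr1 sc (bbar b ws) = (\<Sum>q\<leftarrow>Q. \<Sum>m\<leftarrow>M q. g (F q m))"
    unfolding pr1_def g_def by (simp add: sum_list_map_concat o_def)
  also have "\<dots> = (\<Sum>q\<in>set Q. \<Sum>m\<in>set (M q). g (F q m))"
    by (simp add: Q_def M_def sum_list_distinct_conv_sum_set)
  also have "\<dots> = (\<Sum>q\<in>set Q. \<Sum>m\<in>set (M q). if m = N then b os as else 0)"
  proof (intro sum.cong refl)
    fix q m assume "q \<in> set Q" "m \<in> set (M q)"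
    then have "q < N" "1 \<le> m" "m \<le> N - q" by (auto simp: Q_def M_def)
    \<comment> \<open>F q m is a word of length N + 1 - m\<close>
    moreover have "m = N \<Longrightarrow> q = 0" using \<open>m \<le> N - q\<close> \<open>q < N\<close> by simp
    ultimately show "g (F q m) = (if m = N then b os as else 0)"
      using len m by (auto simp: g_def F_def N_def ksign_def module.scale_one)
  qed
  also have "\<dots> = (\<Sum>q\<in>set Q. if q = 0 then b os as else 0)"
  proof (intro sum.cong refl)
    fix q assume "q \<in> set Q"
    then have "N \<in> set (M q) \<longleftrightarrow> q = 0" using len(3) ne(2) by (auto simp: M_def N_def Suc_le_eq)
    then show "(\<Sum>m\<in>set (M q). if m = N then b os as else 0) = (if q = 0 then b os as else 0)"
      by (simp add: sum.delta')
  qed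
  also have "\<dots> = b os as"
    using len(3) ne(1) by (simp add: Q_def N_def sum.delta')
  finally show ?thesis .
qed

lemma b_wconcat_eq_0_if_long_word:
  assumes V: "vanishes_on_D Obj hom FOb b"
    and ws: "ws \<noteq> []" "\<forall>w\<in>set ws. dword Obj hom FOb w" "wchain ws"
    and w: "w \<in> set ws" "2 \<le> length (snd (snd w))"
    and wc: "wconcat ws = (os, ds, as)"
  shows "b os as = 0"
proof -
  obtain os' ds' as' where w_eq: "w = (os', ds', as')" by (cases w)
  have h: "homw Obj hom os ds as" using homw_wconcat[OF ws] wc by simp
  have F: "os' ! 1 \<in> FOb" and len: "length os' = length as' + 1"
    using ws(2) w w_eq unfolding dword_def homw_def by auto
  \<comment> \<open>the first inner object of the long word survives in the concatenation\<close>
  from len w(2) w_eq have "os' ! 1 \<in> set (butlast os')" by (simp add: nth_butlast[symmetric])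
  then have "os' ! 1 \<in> set os" using wc w(1) w_eq by (force simp: wconcat_def)
  moreover have "length as' \<le> length as"
    using wc w(1) w_eq by (force simp: wconcat_def length_concat intro: member_le_sum_list)
  ultimately have "\<exists>X\<in>set os. X \<in> FOb" "2 \<le> length as" using F w(2) w_eq by auto
  then show ?thesis using V h unfolding vanishes_on_D_def by blast
qed

lemma b_map_pi1_eq_pr1_bbar:
  assumes A: "ainf_cat sc Obj hom b" and V: "vanishes_on_D Obj hom FOb b"
    and ws: "ws \<noteq> []" "\<forall>w\<in>set ws. dword Obj hom FOb w" "wchain ws"
  shows "b (map (hd \<circ> fst) ws @ [last (fst (last ws))]) (map (\<lambda>w. pi1 sc (snd (snd w))) ws)
    = pr1 sc (bbar b ws :: ('k::comm_ring_1, 'm::ab_group_add) tsum)"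
proof -
  have m: "module sc" using A by (rule module_if_ainf_cat)
  obtain os ds as where wc: "wconcat ws = (os, ds, as)" by (cases "wconcat ws")
  have h: "homw Obj hom os ds as" using homw_wconcat[OF ws] wc by simp
  have as: "as = concat (map (snd \<circ> snd) ws)" using wc by (simp add: wconcat_def)
  have word_ne: "snd (snd w) \<noteq> []" if "w \<in> set ws" for w
    using ws(2) that by (cases w) (auto simp: dword_def)
  have rhs: "pr1 sc (bbar b ws :: ('k, 'm) tsum) = b os as"
  proof (rule pr1_bbar_eq_b_wconcat[OF wc m])
    show "length os = length as + 1" "length ds = length as" using h by (auto simp: homw_def)
    show "snd (snd (hd ws)) \<noteq> []" "snd (snd (last ws)) \<noteq> []" using ws(1) word_ne by simp_all
    then show "as \<noteq> []" using ws(1) unfolding as by (cases ws) auto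
  qed
  show ?thesis
  proof (cases "\<forall>w\<in>set ws. length (snd (snd w)) = 1")
    case True
    then have "wconcat ws = (map (hd \<circ> fst) ws @ [last (fst (last ws))],
        map (hd \<circ> fst \<circ> snd) ws, map (hd \<circ> snd \<circ> snd) ws)"
      using ws(2) dword_of_length_one by (intro wconcat_of_length_one_words) blast
    moreover have pi1_words: "map (\<lambda>w. pi1 sc (snd (snd w))) ws = map (hd \<circ> snd \<circ> snd) ws"
      using True m by (simp add: pi1_conv module.scale_one)
    ultimately show ?thesis using wc rhs unfolding pi1_words by simp
  next
    case False
    then obtain i where i: "i < length ws" "length (snd (snd (ws ! i))) \<noteq> 1"
      by (metis in_set_conv_nth)
    moreover have "0 < length (snd (snd (ws ! i)))" using word_ne i(1) by simp
    ultimately have long: "2 \<le> length (snd (snd (ws ! i)))" by linarith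
    have "b (map (hd \<circ> fst) ws @ [last (fst (last ws))]) (map (\<lambda>w. pi1 sc (snd (snd w))) ws) = 0"
      using b_eq_0_if_nth_eq_0[OF A homw_map_pi1[OF A ws], of i] i by (simp add: pi1_conv)
    moreover have "b os as = 0"
      by (rule b_wconcat_eq_0_if_long_word[OF V ws nth_mem[OF i(1)] long wc])
    ultimately show ?thesis using rhs by simp
  qed
qed

theorem lemma7p3:
  fixes sc :: "'k::comm_ring_1 \<Rightarrow> 'm::ab_group_add \<Rightarrow> 'm"
    and Obj FOb :: "'o set"
    and hom :: "'o \<Rightarrow> 'o \<Rightarrow> int \<Rightarrow> 'm set"
    and b :: "'o list \<Rightarrow> 'm list \<Rightarrow> 'm"
  assumes "ainf_cat sc Obj hom b"
    and "FOb \<subseteq> Obj"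
    and "vanishes_on_D Obj hom FOb b"
  shows "(\<forall>X\<in>Obj. \<forall>Y\<in>Obj. \<forall>d a. a \<in> hom X Y d \<longrightarrow> pi1 sc (j1 a) = a)
    \<and> (\<forall>os ds as. dword Obj hom FOb (os, ds, as) \<longrightarrow>
          pi1 sc as \<in> hom (hd os) (last os) (sum_list ds))
    \<and> (\<forall>ws. 1 \<le> length ws \<and> (\<forall>w\<in>set ws. dword Obj hom FOb w) \<and> wchain ws \<longrightarrow>
          b (map (hd \<circ> fst) ws @ [last (fst (last ws))]) (map (\<lambda>w. pi1 sc (snd (snd w))) ws)
          = pr1 sc (bbar b ws :: ('k, 'm) tsum))"
proof -
  have "module sc" using assms(1) by (rule module_if_ainf_cat)
  then show ?thesis
    using pi1_j1 pi1_mem_hom[OF assms(1)] b_map_pi1_eq_pr1_bbar[OF assms(1,3)]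
    by (auto simp: Suc_le_eq)
qed

end
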